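(* Let $A,B$ be real $n{\times}n$ matrices. Extend the reals by two new elements $1^*$ and $0^*$ with the arithmetic described in the context, let $C$ be the $n{\times}n$ matrix with $1^*$ on the diagonal and $0^*$ everywhere else, and let $T'$ be the $3n{\times}3n$ block matrix $$T'=\begin{pmatrix} I & A^T & -B\\ A & C & 0\\ -B^T & 0 & C\end{pmatrix}.$$ Compute a lower triangular $3n{\times}3n$ matrix $L$ from $T'$ by the formulas $L(i,i)=\sqrt{T'(i,i)-\sum_{k=1}^{i-1}L(i,k)^2}$ and $L(i,j)=\frac{1}{L(j,j)}\big(T'(i,j)-\sum_{k=1}^{j-1}L(i,k)L(j,k)\big)$ for $i>j$ (with $L(i,j)=0$ for $i<j$), using the extended arithmetic, with the summands of each sum combined in any order, and with the entries computed in any order such that each $L(i,i)$ is computed after all of $L(i,k)$, $k<i$, and each $L(i,j)$, $i>j$, is computed after all of $L(i,k)$, $k<j$, and $L(j,k)$, $k\le j$. Then the block $L_{32}$ of $L$ (rows $2n+1,\dots,3n$, columns $n+1,\dots,2n$) equals $(A\cdot B)^T$, where $A\cdot B$ is the ordinary real matrix product.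
   Context: Extended arithmetic on $\mathbb{R}\cup\{0^*,1^*\}$ (here $x,y$ denote real numbers, and $-0^*=0^*$, $-1^*=1^*$). Addition/subtraction: $1^*\pm z=z\pm 1^*=1^*$ for every $z$; $0^*\pm 0^*=0^*$, $0^*\pm y=y\pm 0^*=0^*$; $x\pm y$ is the usual real value. Multiplication: $1^*\cdot 1^*=1^*$, $1^*\cdot 0^*=0^*\cdot 1^*=0^*$, $1^*\cdot y=y\cdot 1^*=y$, $0^*\cdot 0^*=0$, $0^*\cdot y=y\cdot 0^*=0$, and $x\cdot y$ is the usual real product. Division: division by $0^*$ is undefined; $1^*/1^*=1^*$, $0^*/1^*=0^*$, $x/1^*=x$; for real $y\neq 0$: $1^*/y=1/y$, $0^*/y=0$, $x/y$ usual. Square root: $\sqrt{1^*}=1^*$, $\sqrt{0^*}=0^*$, $\sqrt{x}$ usual for $x\ge 0$. This arithmetic is commutative and associative for both addition and multiplication (but not distributive), so the value of each sum does not depend on the order of summation. *)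

theory Defs
  imports Complex_Main
begin

text \<open>Extended reals: R x is a real number, Zs is 0*, Os is 1*.
  Undef records the result of an undefined operation (division by 0*,
  division by real 0, square root of a negative real); it is absorbing.\<close>

datatype ext = R real | Zs | Os | Undef

fun ext_add :: "ext \<Rightarrow> ext \<Rightarrow> ext" where
  "ext_add Undef _ = Undef"
| "ext_add _ Undef = Undef"
| "ext_add Os _ = Os"
| "ext_add _ Os = Os"
| "ext_add Zs _ = Zs"
| "ext_add _ Zs = Zs"
| "ext_add (R x) (R y) = R (x + y)"

fun ext_neg :: "ext \<Rightarrow> ext" where
  "ext_neg (R x) = R (- x)"
| "ext_neg Zs = Zs"
| "ext_neg Os = Os"
| "ext_neg Undef = Undef"

definition ext_sub :: "ext \<Rightarrow> ext \<Rightarrow> ext" where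
  "ext_sub a b = ext_add a (ext_neg b)"

fun ext_mul :: "ext \<Rightarrow> ext \<Rightarrow> ext" where
  "ext_mul Undef _ = Undef"
| "ext_mul _ Undef = Undef"
| "ext_mul Os Os = Os"
| "ext_mul Os Zs = Zs"
| "ext_mul Zs Os = Zs"
| "ext_mul Os (R y) = R y"
| "ext_mul (R y) Os = R y"
| "ext_mul Zs Zs = R 0"
| "ext_mul Zs (R y) = R 0"
| "ext_mul (R y) Zs = R 0"
| "ext_mul (R x) (R y) = R (x * y)"

fun ext_div :: "ext \<Rightarrow> ext \<Rightarrow> ext" where
  "ext_div Undef _ = Undef"
| "ext_div _ Undef = Undef"
| "ext_div _ Zs = Undef"
| "ext_div Os Os = Os"
| "ext_div Zs Os = Zs"
| "ext_div (R x) Os = R x"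
| "ext_div Os (R y) = (if y \<noteq> 0 then R (1 / y) else Undef)"
| "ext_div Zs (R y) = (if y \<noteq> 0 then R 0 else Undef)"
| "ext_div (R x) (R y) = (if y \<noteq> 0 then R (x / y) else Undef)"

fun ext_sqrt :: "ext \<Rightarrow> ext" where
  "ext_sqrt Os = Os"
| "ext_sqrt Zs = Zs"
| "ext_sqrt (R x) = (if 0 \<le> x then R (sqrt x) else Undef)"
| "ext_sqrt Undef = Undef"

text \<open>Addition is commutative and associative with neutral element the real 0,
  so finite sums (order-independent) are available via sum.\<close>

instantiation ext :: comm_monoid_add
begin
definition zero_ext_def: "0 = R 0"
definition plus_ext_def: "a + b = ext_add a b"
instance
proof
  fix a b c :: ext
  show "a + b + c = a + (b + c)"
    unfolding plus_ext_def by (cases a; cases b; cases c) auto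
  show "a + b = b + a"
    unfolding plus_ext_def by (cases a; cases b) auto
  show "0 + a = a"
    unfolding plus_ext_def zero_ext_def by (cases a) auto
qed
end

text \<open>Cholesky-type recursion (0-based indices), computed in the extended arithmetic.\<close>

function chol :: "(nat \<Rightarrow> nat \<Rightarrow> ext) \<Rightarrow> nat \<Rightarrow> nat \<Rightarrow> ext" where
  "chol T i j =
     (if i = j then ext_sqrt (ext_sub (T i i) (\<Sum>k\<in>{..<i}. ext_mul (chol T i k) (chol T i k)))
      else if j < i then
        ext_div (ext_sub (T i j) (\<Sum>k\<in>{..<j}. ext_mul (chol T i k) (chol T j k))) (chol T j j)
      else R 0)"
  by auto
termination
  by (relation "inv_image (less_than <*lex*> less_than) (\<lambda>(T, i, j). (i, j))") auto

definition Tprime :: "nat \<Rightarrow> (nat \<Rightarrow> nat \<Rightarrow> real) \<Rightarrow> (nat \<Rightarrow> nat \<Rightarrow> real) \<Rightarrow> nat \<Rightarrow> nat \<Rightarrow> ext" where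
  "Tprime n A B i j =
     (let bi = i div n; bj = j div n; r = i mod n; c = j mod n in
      if bi = 0 \<and> bj = 0 then (if r = c then R 1 else R 0)
      else if bi = 0 \<and> bj = 1 then R (A c r)
      else if bi = 0 \<and> bj = 2 then R (- B r c)
      else if bi = 1 \<and> bj = 0 then R (A r c)
      else if bi = 1 \<and> bj = 1 then (if r = c then Os else Zs)
      else if bi = 1 \<and> bj = 2 then R 0
      else if bi = 2 \<and> bj = 0 then R (- B c r)
      else if bi = 2 \<and> bj = 1 then R 0
      else (if r = c then Os else Zs))"

end

theory Submission
  imports Defs
begin

text \<open>The upper left block of \<open>T'\<close> is
  the real identity, so \<open>L\<^sub>1\<^sub>1 = I\<close>, and then \<open>L\<^sub>2\<^sub>1 = A\<close> and \<open>L\<^sub>3\<^sub>1 = -B\<^sup>T\<close>.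
  In the middle block every sum subtracted from an entry of \<open>C\<close> is real, and \<open>1\<^sup>*\<close> and
  \<open>0\<^sup>*\<close> absorb real summands, so \<open>L\<^sub>2\<^sub>2\<close> has \<open>1\<^sup>*\<close> on the diagonal and \<open>0\<^sup>*\<close> below it.
  Finally in \<open>L\<^sub>3\<^sub>2(i,j) = (0 - \<Sum>\<^sub>k L\<^sub>3\<^sub>1(i,k) A(j,k) - \<Sum>\<^sub>m L\<^sub>3\<^sub>2(i,m) L\<^sub>2\<^sub>2(j,m)) / 1\<^sup>*\<close>
  the second sum vanishes because \<open>y \<cdot> 0\<^sup>* = 0\<close>, leaving \<open>\<Sum>\<^sub>k A(j,k) B(k,i)\<close>.\<close>

declare chol.simps [simp del]
  \<comment> \<open>under the congruence rule for sums the simplifier would unfold \<open>chol\<close> forever\<close>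

lemma chol_diag:
  "chol T i i = ext_sqrt (ext_sub (T i i) (\<Sum>k<i. ext_mul (chol T i k) (chol T i k)))"
  by (subst chol.simps) simp

lemma chol_below_diag:
  "j < i \<Longrightarrow> chol T i j =
     ext_div (ext_sub (T i j) (\<Sum>k<j. ext_mul (chol T i k) (chol T j k))) (chol T j j)"
  by (subst chol.simps) simp

lemma chol_above_diag: "i < j \<Longrightarrow> chol T i j = R 0"
  by (subst chol.simps) simp

lemma sum_R: "finite K \<Longrightarrow> (\<Sum>k\<in>K. R (f k)) = R (\<Sum>k\<in>K. f k)"
  by (induct rule: finite_induct) (auto simp: zero_ext_def plus_ext_def)

lemma sum_lessThan_add:
  "(\<Sum>k<m + j. f k) = (\<Sum>k<m. f k) + (\<Sum>k<j. f (m + k))" for f :: "nat \<Rightarrow> 'a::comm_monoid_add"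
  by (induction j) (auto simp: add.assoc)

context
  fixes n :: nat and A B :: "nat \<Rightarrow> nat \<Rightarrow> real" and r c :: nat
  assumes r: "r < n" and c: "c < n"
begin

private lemma third_block_row: "(2 * n + r) div n = 2" "(2 * n + r) mod n = r"
  using r by auto

lemma Tprime_block11: "Tprime n A B r c = R (if r = c then 1 else 0)"
  using r c by (simp add: Tprime_def Let_def)

lemma Tprime_block21: "Tprime n A B (n + r) c = R (A r c)"
  using r c by (simp add: Tprime_def Let_def)

lemma Tprime_block22: "Tprime n A B (n + r) (n + c) = (if r = c then Os else Zs)"
  using r c by (simp add: Tprime_def Let_def)

lemma Tprime_block31: "Tprime n A B (2 * n + r) c = R (- B c r)"
  using r c by (simp add: Tprime_def Let_def third_block_row)

lemma Tprime_block32: "Tprime n A B (2 * n + r) (n + c) = R 0"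
  using r c by (simp add: Tprime_def Let_def third_block_row)

end

lemma chol_Tprime_block11:
  "i < n \<Longrightarrow> j < n \<Longrightarrow> chol (Tprime n A B) i j = R (if i = j then 1 else 0)"
proof (induction i arbitrary: j rule: less_induct)
  case (less i)
  note row_IH = less.IH
  from less.prems show ?case
  proof (induction j rule: less_induct)
    case (less j)
    consider "j = i" | "j < i" | "i < j" by linarith
    then show ?case
    proof cases
      case 1
      have "(\<Sum>k<i. ext_mul (chol (Tprime n A B) i k) (chol (Tprime n A B) i k)) = (\<Sum>k<i. R 0)"
        using less 1 by (intro sum.cong) auto
      with less.prems show ?thesis
        unfolding 1 by (subst chol_diag) (simp add: sum_R Tprime_block11 ext_sub_def)
    next
      case 2
      have "(\<Sum>k<j. ext_mul (chol (Tprime n A B) i k) (chol (Tprime n A B) j k)) = (\<Sum>k<j. R 0)"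
        using less 2 row_IH by (intro sum.cong) auto
      moreover have "chol (Tprime n A B) j j = R 1"
        using row_IH[of j j] 2 less.prems by simp
      ultimately show ?thesis
        using 2 less.prems by (subst chol_below_diag) (simp_all add: sum_R Tprime_block11 ext_sub_def)
    qed (simp add: chol_above_diag)
  qed
qed

lemma chol_Tprime_block21:
  "r < n \<Longrightarrow> c < n \<Longrightarrow> chol (Tprime n A B) (n + r) c = R (A r c)"
proof (induction c rule: less_induct)
  case (less c)
  have "(\<Sum>k<c. ext_mul (chol (Tprime n A B) (n + r) k) (chol (Tprime n A B) c k)) = (\<Sum>k<c. R 0)"
    using less by (intro sum.cong) (auto simp: chol_Tprime_block11)
  with less.prems show ?case
    by (subst chol_below_diag) (simp_all add: chol_Tprime_block11 sum_R Tprime_block21 ext_sub_def)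
qed

lemma chol_Tprime_block31:
  "r < n \<Longrightarrow> c < n \<Longrightarrow> chol (Tprime n A B) (2 * n + r) c = R (- B c r)"
proof (induction c rule: less_induct)
  case (less c)
  have "(\<Sum>k<c. ext_mul (chol (Tprime n A B) (2 * n + r) k) (chol (Tprime n A B) c k)) = (\<Sum>k<c. R 0)"
    using less by (intro sum.cong) (auto simp: chol_Tprime_block11)
  with less.prems show ?case
    by (subst chol_below_diag) (simp_all add: chol_Tprime_block11 sum_R Tprime_block31 ext_sub_def)
qed

lemma chol_Tprime_block22:
  "r < n \<Longrightarrow> c < n \<Longrightarrow>
   chol (Tprime n A B) (n + r) (n + c) = (if r = c then Os else if c < r then Zs else R 0)"
proof (induction c arbitrary: r rule: less_induct)
  case (less c)
  have diag: "chol (Tprime n A B) (n + c) (n + c) = Os"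
  proof -
    have "(\<Sum>k<n + c. ext_mul (chol (Tprime n A B) (n + c) k) (chol (Tprime n A B) (n + c) k))
        = R (\<Sum>k<n. A c k * A c k) + (\<Sum>k<c. R 0)"
      unfolding sum_lessThan_add sum_R[OF finite_lessThan, symmetric] using less
      by (intro arg_cong2[where f = "(+)"] sum.cong) (auto simp: chol_Tprime_block21)
    then show ?thesis
      using less.prems by (subst chol_diag) (simp add: sum_R Tprime_block22 ext_sub_def plus_ext_def)
  qed
  consider "r = c" | "c < r" | "r < c" by linarith
  then show ?case
  proof cases
    case 2
    have "(\<Sum>k<n + c. ext_mul (chol (Tprime n A B) (n + r) k) (chol (Tprime n A B) (n + c) k))
        = R (\<Sum>k<n. A r k * A c k) + (\<Sum>k<c. R 0)"
      unfolding sum_lessThan_add sum_R[OF finite_lessThan, symmetric] using less 2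
      by (intro arg_cong2[where f = "(+)"] sum.cong) (auto simp: chol_Tprime_block21)
    then show ?thesis
      using less.prems 2 diag
      by (subst chol_below_diag) (simp_all add: sum_R Tprime_block22 ext_sub_def plus_ext_def)
  qed (simp_all add: diag chol_above_diag)
qed

lemma chol_Tprime_block32:
  "i < n \<Longrightarrow> j < n \<Longrightarrow> chol (Tprime n A B) (2 * n + i) (n + j) = R (\<Sum>k<n. A j k * B k i)"
proof (induction j rule: less_induct)
  case (less j)
  have "(\<Sum>k<n + j. ext_mul (chol (Tprime n A B) (2 * n + i) k) (chol (Tprime n A B) (n + j) k))
      = R (\<Sum>k<n. - B k i * A j k) + (\<Sum>k<j. R 0)"
    unfolding sum_lessThan_add sum_R[OF finite_lessThan, symmetric] using less
    by (intro arg_cong2[where f = "(+)"] sum.cong)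
      (auto simp: chol_Tprime_block21 chol_Tprime_block31 chol_Tprime_block22)
  moreover have "- (\<Sum>k<n. - B k i * A j k) = (\<Sum>k<n. A j k * B k i)"
    by (simp add: sum_negf [symmetric] mult.commute)
  ultimately show ?case
    using less.prems
    by (subst chol_below_diag) (simp_all add: chol_Tprime_block22 sum_R Tprime_block32 ext_sub_def plus_ext_def)
qed

theorem lemma2p3:
  fixes n :: nat and A B :: "nat \<Rightarrow> nat \<Rightarrow> real"
  shows "\<forall>i<n. \<forall>j<n. chol (Tprime n A B) (2 * n + i) (n + j) = R (\<Sum>k<n. A j k * B k i)"
  using chol_Tprime_block32 by blast

end
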